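(* Let $\mathcal Z_\nu$ be the Zorich map described in the context and assume $\nu\lambda>1/e$. For $\delta>0$ let $C_\delta=\{x\in\mathbb R^3:x_1^2+x_2^2<\delta^2\}$. Then there exist $\delta\in(0,\lambda)$ and $c>0$ such that: (a) for every $x\in C_\delta$, $p_3(\mathcal Z_\nu(x))>p_3(x)+c$, where $p_3(x_1,x_2,x_3)=x_3$; (b) for every $x\in C_\delta$ with $(x_1,x_2)\neq(0,0)$ there is $n\in\mathbb N$ with $\mathcal Z_\nu^n(x)\notin C_\delta$.
   Context: Zorich maps. Let $Q=\{(x_1,x_2)\in\mathbb R^2:|x_1|\le1,|x_2|\le1\}$. Let $L\ge1$ and let $\mathfrak h=(\mathfrak h_1,\mathfrak h_2,\mathfrak h_3)$ be a sense-preserving $L$-bi-Lipschitz map (i.e. $|a-b|/L\le|\mathfrak h(a)-\mathfrak h(b)|\le L|a-b|$) of $Q$ onto the closed upper unit hemisphere $\{x\in\mathbb R^3:|x|=1,x_3\ge0\}$, with $\partial Q$ mapped onto the equator. Assume $\mathfrak h_1(t,t)=\mathfrak h_2(t,t)$ and $\mathfrak h_1(t,-t)=-\mathfrak h_2(t,-t)$ for $t\in[-1,1]$ (so $\mathfrak h(0,0)=(0,0,1)$). Let $\lambda\ge1$ and $h(x_1,x_2)=\lambda\mathfrak h(x_1/\lambda,x_2/\lambda)$ on $\lambda Q=[-\lambda,\lambda]^2$. For $\nu>0$ set $\mathcal Z_\nu(x_1,x_2,x_3)=\nu e^{x_3}h(x_1,x_2)$ on $\lambda Q\times\mathbb R$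 (which is mapped onto $\{x_3\ge0\}$), and extend $\mathcal Z_\nu$ to $\mathbb R^3$ by repeated reflection: in the domain across the faces $x_1=(2k+1)\lambda$, $x_2=(2k+1)\lambda$ ($k\in\mathbb Z$) of the beams, and in the range across the plane $x_3=0$. *)

theory Defs
  imports "HOL-Analysis.Analysis" "HOL-Complex_Analysis.Complex_Analysis"
begin

definition sqQ :: "(real^2) set" where
  "sqQ = {x. \<bar>x$1\<bar> \<le> 1 \<and> \<bar>x$2\<bar> \<le> 1}"

definition sqQ_boundary :: "(real^2) set" where
  "sqQ_boundary = {x \<in> sqQ. \<bar>x$1\<bar> = 1 \<or> \<bar>x$2\<bar> = 1}"

definition upper_hemisphere :: "(real^3) set" where
  "upper_hemisphere = {x. norm x = 1 \<and> x$3 \<ge> 0}"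

definition equator :: "(real^3) set" where
  "equator = {x. norm x = 1 \<and> x$3 = 0}"

definition bi_lipschitz_on :: "real \<Rightarrow> ('a::metric_space) set \<Rightarrow> ('a \<Rightarrow> 'b::metric_space) \<Rightarrow> bool" where
  "bi_lipschitz_on L S f \<longleftrightarrow>
     (\<forall>a\<in>S. \<forall>b\<in>S. dist a b / L \<le> dist (f a) (f b) \<and> dist (f a) (f b) \<le> L * dist a b)"

definition sqQ_loop :: "real \<Rightarrow> real^2" where
  "sqQ_loop = linepath (vector [1,-1]) (vector [1,1]) +++
              (linepath (vector [1,1]) (vector [-1,1]) +++
              (linepath (vector [-1,1]) (vector [-1,-1]) +++
               linepath (vector [-1,-1]) (vector [1,-1])))"

text \<open>Sense-preserving (orientation with respect to the outward normal of the hemisphere,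
  equivalently the standard orientation after vertical projection): the image of the
  positively oriented boundary of Q winds once positively around the vertical axis.\<close>
definition sense_preserving_hemi :: "(real^2 \<Rightarrow> real^3) \<Rightarrow> bool" where
  "sense_preserving_hemi hh \<longleftrightarrow>
     winding_number ((\<lambda>p. Complex (hh p $ 1) (hh p $ 2)) \<circ> sqQ_loop) 0 = 1"

text \<open>Folding of a real coordinate into [-lam,lam] by repeated reflection across the
  lines (2k+1)lam; fold_index counts reflections (up to parity).\<close>
definition fold_index :: "real \<Rightarrow> real \<Rightarrow> int" where
  "fold_index lam s = \<lfloor>s / (2 * lam) + 1/2\<rfloor>"

definition fold_coord :: "real \<Rightarrow> real \<Rightarrow> real" where
  "fold_coord lam s =
     (if even (fold_index lam s) then 1 else -1) * (s - 2 * of_int (fold_index lam s) * lam)"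

definition zorich :: "(real^2 \<Rightarrow> real^3) \<Rightarrow> real \<Rightarrow> real \<Rightarrow> real^3 \<Rightarrow> real^3" where
  "zorich hh lam nu x =
     (let k1 = fold_index lam (x$1); k2 = fold_index lam (x$2);
          u = vector [fold_coord lam (x$1), fold_coord lam (x$2)] :: real^2;
          y = lam *\<^sub>R hh ((1 / lam) *\<^sub>R u);
          s = (if even (k1 + k2) then 1 else -1) :: real
      in (nu * exp (x$3)) *\<^sub>R vector [y$1, y$2, s * y$3])"

definition cyl :: "real \<Rightarrow> (real^3) set" where
  "cyl \<delta> = {x. (x$1)\<^sup>2 + (x$2)\<^sup>2 < \<delta>\<^sup>2}"

end

theory Submission
  imports Defs
begin

(* Near the vertical axis the Zorich map is x \<mapsto> \<nu> e^{x_3} \<lambda> h(x_1/\<lambda>, x_2/\<lambda>), and the symmetry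
   conditions force h(0) to be the north pole. Comparing with the pole, the bi-Lipschitz bound
   gives h_3(p) \<ge> 1 - L|p| and |(h_1, h_2)(p)| \<ge> |p| / (\<surd>2 L). On a thin cylinder the new
   height is therefore at least a e^{x_3} with a > 1/e, and a e^t - t \<ge> 1 + ln a > 0 gives a
   uniform gain c. Meanwhile the distance to the axis is multiplied by at least
   \<nu> e^{x_3} / (\<surd>2 L), which exceeds 2 once the height is large, so an orbit off the axis
   cannot stay in the cylinder. *)

unbundle no fps_syntax

lemma exp_gain_over_identity:
  fixes a t :: real
  assumes "1 / exp 1 < a"
  shows "0 < 1 + ln a" and "t + (1 + ln a) / 2 < a * exp t"
proof -
  have "0 < a"
    using assms by (smt (verit) exp_gt_zero divide_pos_pos)
  then have "ln (1 / exp 1) < ln a"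
    using assms by simp
  then show pos: "0 < 1 + ln a"
    by (simp add: ln_div)
  have "1 + (t + ln a) \<le> a * exp t"
    using exp_ge_add_one_self[of "t + ln a"] \<open>0 < a\<close> by (simp add: exp_add mult.commute)
  then show "t + (1 + ln a) / 2 < a * exp t"
    using pos by argo
qed

lemma orbit_escapes_if_radius_explodes:
  fixes f :: "'a \<Rightarrow> 'a" and h r :: "'a \<Rightarrow> real"
  assumes "0 < c" "0 < K"
    and height: "\<And>y. y \<in> S \<Longrightarrow> h y + c < h (f y)"
    and radius: "\<And>y. y \<in> S \<Longrightarrow> K * exp (h y) * r y \<le> r (f y)"
    and bounded: "\<And>y. y \<in> S \<Longrightarrow> r y < B"
    and "0 < r x"
  shows "\<exists>n. (f ^^ n) x \<notin> S"
proof (rule ccontr)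
  assume "\<not> ?thesis"
  then have orbit: "(f ^^ n) x \<in> S" for n by blast
  have height_orbit: "h x + real n * c \<le> h ((f ^^ n) x)" for n
  proof (induction n)
    case (Suc n)
    then show ?case using height[OF orbit[of n]] by (simp add: algebra_simps)
  qed simp
  have radius_pos: "0 < r ((f ^^ n) x)" for n
  proof (induction n)
    case (Suc n)
    then have "0 < K * exp (h ((f ^^ n) x)) * r ((f ^^ n) x)"
      using \<open>0 < K\<close> by simp
    then show ?case
      using radius[OF orbit[of n]] by simp
  qed (simp add: \<open>0 < r x\<close>)
  obtain M :: nat where M: "(2 / K - h x) / c \<le> real M"
    using real_arch_simple by blast
  have doubling: "2 * r ((f ^^ n) x) \<le> r ((f ^^ Suc n) x)" if "M \<le> n" for n
  proof -
    have "(2 / K - h x) / c * c \<le> real n * c"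
      using M that \<open>0 < c\<close> by (intro mult_right_mono) auto
    then have "2 / K \<le> h ((f ^^ n) x)"
      using height_orbit[of n] \<open>0 < c\<close> by simp
    also have "\<dots> \<le> exp (h ((f ^^ n) x))"
      using exp_ge_add_one_self[of "h ((f ^^ n) x)"] by linarith
    finally have "2 \<le> K * exp (h ((f ^^ n) x))"
      using \<open>0 < K\<close> by (simp add: field_simps)
    then have "2 * r ((f ^^ n) x) \<le> K * exp (h ((f ^^ n) x)) * r ((f ^^ n) x)"
      using radius_pos[of n] by (intro mult_right_mono) auto
    then show ?thesis
      using radius[OF orbit[of n]] by simp
  qed
  have growth: "2 ^ k * r ((f ^^ M) x) \<le> r ((f ^^ (M + k)) x)" for k
  proof (induction k)
    case (Suc k)
    then show ?case using doubling[of "M + k"] by simp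
  qed simp
  obtain k where "B / r ((f ^^ M) x) < 2 ^ k"
    using real_arch_pow[of 2] by auto
  then have "B < 2 ^ k * r ((f ^^ M) x)"
    using radius_pos[of M] by (simp add: pos_divide_less_eq)
  also have "\<dots> \<le> r ((f ^^ (M + k)) x)"
    by (rule growth)
  finally show False
    using bounded[OF orbit[of "M + k"]] by simp
qed

lemma norm_vec2_power2: "(norm (v::real^2))\<^sup>2 = (v$1)\<^sup>2 + (v$2)\<^sup>2"
  by (simp add: norm_vec_def L2_set_def sum_2)

lemma norm_vec3_power2: "(norm (v::real^3))\<^sup>2 = (v$1)\<^sup>2 + (v$2)\<^sup>2 + (v$3)\<^sup>2"
  by (simp add: norm_vec_def L2_set_def sum_3)

lemma axis_3_nth:
  "(axis 3 1 :: real^3) $ 1 = 0" "(axis 3 1 :: real^3) $ 2 = 0" "(axis 3 1 :: real^3) $ 3 = 1"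
  by (simp_all add: axis_def)

lemma upper_hemisphere_eq_north_pole:
  fixes v :: "real^3"
  assumes "v \<in> upper_hemisphere" "v$1 = 0" "v$2 = 0"
  shows "v = axis 3 1"
proof -
  have "(v$3)\<^sup>2 = 1" "v$3 \<ge> 0"
    using assms norm_vec3_power2[of v] by (auto simp: upper_hemisphere_def)
  then have "v$3 = 1" by (simp add: power2_eq_1_iff)
  then show ?thesis using assms by (simp add: vec_eq_iff forall_3 axis_3_nth)
qed

text \<open>On the upper hemisphere the chordal distance to the pole is controlled by the horizontal
  part, because \<open>|v - e\<^sub>3|\<^sup>2 = 2 - 2v\<^sub>3 \<le> 2(1 - v\<^sub>3\<^sup>2)\<close> for \<open>0 \<le> v\<^sub>3 \<le> 1\<close>.\<close>
lemma upper_hemisphere_dist_north_pole: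
  fixes v :: "real^3"
  assumes "v \<in> upper_hemisphere"
  shows "(norm (v - axis 3 1))\<^sup>2 \<le> 2 * ((v$1)\<^sup>2 + (v$2)\<^sup>2)"
proof -
  have unit: "(v$1)\<^sup>2 + (v$2)\<^sup>2 + (v$3)\<^sup>2 = 1" and nonneg: "0 \<le> v$3"
    using assms norm_vec3_power2[of v] by (auto simp: upper_hemisphere_def)
  then have "v$3 \<le> 1"
    by (smt (verit) power2_le_imp_le zero_le_power2 one_power2)
  then have "(v$3)\<^sup>2 \<le> v$3"
    using nonneg by (simp add: power2_eq_square mult_left_le)
  moreover have "(norm (v - axis 3 1))\<^sup>2 = (v$1)\<^sup>2 + (v$2)\<^sup>2 + (v$3 - 1)\<^sup>2"
    by (simp add: norm_vec3_power2 axis_3_nth)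
  ultimately show ?thesis
    using unit by (simp add: power2_diff)
qed

lemma bi_lipschitz_chart_near_north_pole:
  fixes hh :: "real^2 \<Rightarrow> real^3"
  assumes "0 < L" "bi_lipschitz_on L S hh" "hh ` S \<subseteq> upper_hemisphere"
    and "0 \<in> S" "hh 0 = axis 3 1" "p \<in> S"
  shows "1 - L * norm p \<le> hh p $ 3"
    and "(norm p)\<^sup>2 / (2 * L\<^sup>2) \<le> (hh p $ 1)\<^sup>2 + (hh p $ 2)\<^sup>2"
proof -
  have lower: "norm p / L \<le> norm (hh p - axis 3 1)" and upper: "norm (hh p - axis 3 1) \<le> L * norm p"
    using assms(2,4,5,6) unfolding bi_lipschitz_on_def by (force simp: dist_norm)+
  have "\<bar>(hh p - axis 3 1) $ 3\<bar> \<le> L * norm p"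
    using upper component_le_norm_cart order_trans by blast
  then show "1 - L * norm p \<le> hh p $ 3"
    by (simp add: axis_3_nth)
  have "(norm p / L)\<^sup>2 \<le> (norm (hh p - axis 3 1))\<^sup>2"
    using lower assms(1) by (intro power_mono) auto
  also have "\<dots> \<le> 2 * ((hh p $ 1)\<^sup>2 + (hh p $ 2)\<^sup>2)"
    using assms(3,6) by (intro upper_hemisphere_dist_north_pole) auto
  finally show "(norm p)\<^sup>2 / (2 * L\<^sup>2) \<le> (hh p $ 1)\<^sup>2 + (hh p $ 2)\<^sup>2"
    by (simp add: power_divide field_simps)
qed

lemma fold_index_eq_0: "0 < lam \<Longrightarrow> \<bar>s\<bar> < lam \<Longrightarrow> fold_index lam s = 0"
  unfolding fold_index_def by (simp add: floor_eq_iff field_simps abs_less_iff)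

lemma fold_coord_eq: "0 < lam \<Longrightarrow> \<bar>s\<bar> < lam \<Longrightarrow> fold_coord lam s = s"
  by (simp add: fold_coord_def fold_index_eq_0)

lemma cyl_abs_less:
  fixes x :: "real^3"
  assumes "x \<in> cyl \<delta>" "0 < \<delta>"
  shows "\<bar>x$1\<bar> < \<delta>" "\<bar>x$2\<bar> < \<delta>"
proof -
  have "(x$1)\<^sup>2 + (x$2)\<^sup>2 < \<delta>\<^sup>2"
    using assms(1) by (simp add: cyl_def)
  then have "(x$1)\<^sup>2 < \<delta>\<^sup>2" "(x$2)\<^sup>2 < \<delta>\<^sup>2"
    using zero_le_power2[of "x$1"] zero_le_power2[of "x$2"] by linarith+
  then show "\<bar>x$1\<bar> < \<delta>" "\<bar>x$2\<bar> < \<delta>"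
    using assms(2) by (simp_all add: power2_less_imp_less abs_less_iff)
qed

lemma cyl_mono: "0 \<le> \<delta> \<Longrightarrow> \<delta> \<le> lam \<Longrightarrow> cyl \<delta> \<subseteq> cyl lam"
  unfolding cyl_def by (auto intro: less_le_trans power_mono)

lemma zorich_eq_on_cyl:
  fixes x :: "real^3"
  assumes "0 < lam" "x \<in> cyl lam"
  shows "zorich hh lam nu x = (nu * exp (x$3) * lam) *\<^sub>R hh ((1/lam) *\<^sub>R vector [x$1, x$2])"
proof -
  have "\<bar>x$1\<bar> < lam" "\<bar>x$2\<bar> < lam"
    using cyl_abs_less assms by auto
  then have "fold_index lam (x$1) = 0" "fold_index lam (x$2) = 0"
    "fold_coord lam (x$1) = x$1" "fold_coord lam (x$2) = x$2"
    using assms(1) by (simp_all add: fold_index_eq_0 fold_coord_eq)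
  then show ?thesis
    unfolding zorich_def Let_def by (simp add: vec_eq_iff forall_3)
qed

lemma cyl_base_point:
  fixes x :: "real^3"
  assumes "0 < \<delta>" "\<delta> \<le> lam" "x \<in> cyl \<delta>"
  shows "(1/lam) *\<^sub>R vector [x$1, x$2] \<in> sqQ"
    and "(norm ((1/lam) *\<^sub>R vector [x$1, x$2] :: real^2))\<^sup>2 = ((x$1)\<^sup>2 + (x$2)\<^sup>2) / lam\<^sup>2"
    and "lam * norm ((1/lam) *\<^sub>R vector [x$1, x$2] :: real^2) < \<delta>"
proof -
  let ?p = "(1/lam) *\<^sub>R vector [x$1, x$2] :: real^2"
  have lam: "0 < lam" using assms(1,2) by linarith
  have "\<bar>x$1\<bar> < lam" "\<bar>x$2\<bar> < lam"
    using cyl_abs_less[OF assms(3,1)] assms(2) by linarith+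
  then show "?p \<in> sqQ"
    using lam by (simp add: sqQ_def abs_mult)
  show "(norm ?p)\<^sup>2 = ((x$1)\<^sup>2 + (x$2)\<^sup>2) / lam\<^sup>2"
    by (simp add: norm_vec2_power2 power_divide add_divide_distrib)
  also have "\<dots> < \<delta>\<^sup>2 / lam\<^sup>2"
    using assms(3) lam by (intro divide_strict_right_mono) (simp_all add: cyl_def)
  finally have "(norm ?p)\<^sup>2 < (\<delta> / lam)\<^sup>2"
    by (simp only: power_divide)
  then have "norm ?p < \<delta> / lam"
    using assms(1) lam by (simp add: power2_less_imp_less)
  then show "lam * norm ?p < \<delta>"
    using lam by (simp add: field_simps)
qed

lemma zorich_estimates_on_cyl:
  fixes hh :: "real^2 \<Rightarrow> real^3" and x :: "real^3"
  assumes "0 < L" "bi_lipschitz_on L sqQ hh" "hh ` sqQ \<subseteq> upper_hemisphere" "hh 0 = axis 3 1"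
    and "0 < \<delta>" "\<delta> \<le> lam" "0 < nu" "x \<in> cyl \<delta>"
  shows "nu * (lam - L * \<delta>) * exp (x$3) \<le> zorich hh lam nu x $ 3"
    and "nu\<^sup>2 / (2 * L\<^sup>2) * exp (2 * x$3) * ((x$1)\<^sup>2 + (x$2)\<^sup>2)
           \<le> (zorich hh lam nu x $ 1)\<^sup>2 + (zorich hh lam nu x $ 2)\<^sup>2"
proof -
  define p :: "real^2" where "p = (1/lam) *\<^sub>R vector [x$1, x$2]"
  have lam: "0 < lam" using assms(5,6) by linarith
  have Z: "zorich hh lam nu x = (nu * exp (x$3) * lam) *\<^sub>R hh p"
    unfolding p_def using lam assms(5,6,8) cyl_mono[of \<delta> lam] by (intro zorich_eq_on_cyl) auto
  note p = cyl_base_point[OF assms(5,6,8), folded p_def]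
  have sqQ_0: "0 \<in> sqQ" by (simp add: sqQ_def)
  have "lam * (L * norm p) \<le> L * \<delta>"
    using p(3) assms(1) by (simp add: mult.left_commute)
  moreover have "1 - L * norm p \<le> hh p $ 3"
    using bi_lipschitz_chart_near_north_pole(1)[OF assms(1-3) sqQ_0 assms(4) p(1)] .
  ultimately have "lam - L * \<delta> \<le> lam * hh p $ 3"
    using mult_left_mono[of "1 - L * norm p" "hh p $ 3" lam] lam by (simp add: right_diff_distrib)
  then show "nu * (lam - L * \<delta>) * exp (x$3) \<le> zorich hh lam nu x $ 3"
    using assms(7) by (simp add: Z mult_left_mono)
  have "(zorich hh lam nu x $ 1)\<^sup>2 + (zorich hh lam nu x $ 2)\<^sup>2
      = (nu * exp (x$3) * lam)\<^sup>2 * ((hh p $ 1)\<^sup>2 + (hh p $ 2)\<^sup>2)"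
    by (simp add: Z power_mult_distrib algebra_simps)
  also have "\<dots> \<ge> (nu * exp (x$3) * lam)\<^sup>2 * ((norm p)\<^sup>2 / (2 * L\<^sup>2))"
    using bi_lipschitz_chart_near_north_pole(2)[OF assms(1-3) sqQ_0 assms(4) p(1)]
    by (rule mult_left_mono) simp
  finally have "(nu * exp (x$3) * lam)\<^sup>2 * ((norm p)\<^sup>2 / (2 * L\<^sup>2))
      \<le> (zorich hh lam nu x $ 1)\<^sup>2 + (zorich hh lam nu x $ 2)\<^sup>2" .
  moreover have "(nu * exp (x$3) * lam)\<^sup>2 * ((norm p)\<^sup>2 / (2 * L\<^sup>2))
      = nu\<^sup>2 / (2 * L\<^sup>2) * exp (2 * x$3) * ((x$1)\<^sup>2 + (x$2)\<^sup>2)"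
    using lam assms(1) unfolding p(2) power_mult_distrib exp_double
    by (simp add: field_simps)
  ultimately show "nu\<^sup>2 / (2 * L\<^sup>2) * exp (2 * x$3) * ((x$1)\<^sup>2 + (x$2)\<^sup>2)
      \<le> (zorich hh lam nu x $ 1)\<^sup>2 + (zorich hh lam nu x $ 2)\<^sup>2"
    by linarith
qed

lemma zorich_orbit_leaves_cyl:
  fixes hh :: "real^2 \<Rightarrow> real^3" and x :: "real^3"
  assumes "0 < L" "bi_lipschitz_on L sqQ hh" "hh ` sqQ \<subseteq> upper_hemisphere" "hh 0 = axis 3 1"
    and "0 < \<delta>" "\<delta> \<le> lam" "0 < nu" "0 < c"
    and height: "\<And>y. y \<in> cyl \<delta> \<Longrightarrow> y$3 + c < zorich hh lam nu y $ 3"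
    and "x \<in> cyl \<delta>" "(x$1, x$2) \<noteq> (0, 0)"
  shows "\<exists>n. (zorich hh lam nu ^^ n) x \<notin> cyl \<delta>"
proof (rule orbit_escapes_if_radius_explodes)
  show "0 < 2 * c" "0 < nu\<^sup>2 / (2 * L\<^sup>2)"
    using assms(1,7,8) by auto
  show "2 * y$3 + 2 * c < 2 * zorich hh lam nu y $ 3" if "y \<in> cyl \<delta>" for y :: "real^3"
    using height[OF that] by simp
  show "nu\<^sup>2 / (2 * L\<^sup>2) * exp (2 * y$3) * ((y$1)\<^sup>2 + (y$2)\<^sup>2)
      \<le> (zorich hh lam nu y $ 1)\<^sup>2 + (zorich hh lam nu y $ 2)\<^sup>2" if "y \<in> cyl \<delta>" for y :: "real^3"
    using zorich_estimates_on_cyl(2)[OF assms(1-7) that] by simp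
  show "(y$1)\<^sup>2 + (y$2)\<^sup>2 < \<delta>\<^sup>2" if "y \<in> cyl \<delta>" for y :: "real^3"
    using that by (simp add: cyl_def)
  show "0 < (x$1)\<^sup>2 + (x$2)\<^sup>2"
    using assms(11) by (simp add: sum_power2_gt_zero_iff)
qed

lemma exists_radius_below_threshold:
  fixes L lam nu :: real
  assumes "1 \<le> L" "0 < lam" "0 < nu" "1 / exp 1 < nu * lam"
  obtains \<delta> where "0 < \<delta>" "\<delta> < lam" "1 / exp 1 < nu * (lam - L * \<delta>)"
proof
  define m where "m = lam - 1 / (exp 1 * nu)"
  have m: "0 < m" "m < lam"
    using assms(3,4) by (auto simp: m_def field_simps)
  have "lam \<le> 2 * L * lam"
    using assms(1,2) by simp
  then have "m < 2 * L * lam"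
    using m by linarith
  then show "0 < m / (2 * L)" "m / (2 * L) < lam"
    using m assms(1) by (simp_all add: field_simps)
  have "nu * (lam - L * (m / (2 * L))) = (nu * lam + 1 / exp 1) / 2"
    using assms(1,3) by (simp add: m_def field_simps)
  then show "1 / exp 1 < nu * (lam - L * (m / (2 * L)))"
    using assms(4) by simp
qed

theorem lemma4p2:
  fixes hh :: "real^2 \<Rightarrow> real^3" and L lam nu :: real
  assumes L: "L \<ge> 1"
    and bilip: "bi_lipschitz_on L sqQ hh"
    and onto: "hh ` sqQ = upper_hemisphere"
    and bdry: "hh ` sqQ_boundary = equator"
    and sense: "sense_preserving_hemi hh"
    and sym1: "\<And>t. t \<in> {-1..1} \<Longrightarrow> hh (vector [t, t]) $ 1 = hh (vector [t, t]) $ 2"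
    and sym2: "\<And>t. t \<in> {-1..1} \<Longrightarrow> hh (vector [t, -t]) $ 1 = - (hh (vector [t, -t]) $ 2)"
    and lam: "lam \<ge> 1"
    and nu: "nu > 0"
    and nulam: "nu * lam > 1 / exp 1"
  shows "\<exists>\<delta> c. 0 < \<delta> \<and> \<delta> < lam \<and> c > 0 \<and>
           (\<forall>x \<in> cyl \<delta>. zorich hh lam nu x $ 3 > x $ 3 + c) \<and>
           (\<forall>x \<in> cyl \<delta>. (x$1, x$2) \<noteq> (0, 0) \<longrightarrow>
              (\<exists>n::nat. (zorich hh lam nu ^^ n) x \<notin> cyl \<delta>))"
proof -
  have hemi: "hh ` sqQ \<subseteq> upper_hemisphere"
    using onto by simp
  have "vector [0, 0] = (0 :: real^2)"
    by (simp add: vec_eq_iff forall_2)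
  then have pole: "hh 0 = axis 3 1"
    using hemi sym1[of 0] sym2[of 0]
    by (intro upper_hemisphere_eq_north_pole) (auto simp: sqQ_def)
  have "0 < lam"
    using lam by simp
  then obtain \<delta> where \<delta>: "0 < \<delta>" "\<delta> < lam" and a: "1 / exp 1 < nu * (lam - L * \<delta>)"
    using exists_radius_below_threshold[OF L _ nu nulam] by blast
  have L_pos: "0 < L" and \<delta>_le: "\<delta> \<le> lam"
    using L \<delta> by auto
  define c where "c = (1 + ln (nu * (lam - L * \<delta>))) / 2"
  have c: "0 < c"
    using exp_gain_over_identity(1)[OF a] by (simp add: c_def)
  have height: "x$3 + c < zorich hh lam nu x $ 3" if "x \<in> cyl \<delta>" for x :: "real^3"
    using zorich_estimates_on_cyl(1)[OF L_pos bilip hemi pole \<delta>(1) \<delta>_le nu that]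
      exp_gain_over_identity(2)[OF a, of "x$3"]
    by (simp add: c_def)
  have escape: "\<exists>n. (zorich hh lam nu ^^ n) x \<notin> cyl \<delta>"
    if "x \<in> cyl \<delta>" "(x$1, x$2) \<noteq> (0, 0)" for x :: "real^3"
    using zorich_orbit_leaves_cyl[OF L_pos bilip hemi pole \<delta>(1) \<delta>_le nu c height that] .
  show ?thesis
    using \<delta> c height escape by blast
qed

end
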